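(* Let $\mathcal{M}$ be a set of models, $c$ a cost function, $\mathcal{S}$ a step neighborhood function and $m_0$ a base model, as in the context. Assume there exist constants $c_{\min},c_{\max}$ with $0<c_{\min}\le c(m)\le c_{\max}$ for all $m\in\mathcal{M}$. Let $\gamma\ge1$ and $\lambda>0$, and for $K\ge0$ let $$z_\lambda(K)=\inf_{\bm{m}\in\mathcal{P}_K}\Big(c(m_K)+\lambda\sum_{k=1}^K\gamma^k c(m_k)\Big).$$ Then every $K_{\mathrm{opt}}\in\arg\min_{K\ge0} z_\lambda(K)$ satisfies $K_{\mathrm{opt}}\le K_{\max}$, where $$K_{\max}=\begin{cases}\dfrac{c_{\max}}{\lambda c_{\min}} & \text{if }\gamma=1,\\[2mm] \dfrac{\log\!\left(1+\frac{(\gamma-1)c_{\max}}{\lambda\gamma c_{\min}}\right)}{\log\gamma} & \text{if }\gamma>1.\end{cases}$$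
   Context: Setting: $\mathcal{M}$ is a set (of models), $c:\mathcal{M}\to(0,\infty)$ is a cost function, and $\mathcal{S}:\mathcal{M}\to 2^{\mathcal{M}}$ is a step neighborhood function with $\mathcal{S}(m)\neq\emptyset$ for all $m$. A fixed base model $m_0\in\mathcal{M}$ is given. An interpretable path of length $K\ge 0$ is a sequence $\bm{m}=(m_1,\dots,m_K)$ with $m_k\in\mathcal{S}(m_{k-1})$ for $1\le k\le K$; its final model is $m_K$ (which is $m_0$ when $K=0$, in which case the sum in $z_\lambda(0)$ is empty and $z_\lambda(0)=c(m_0)$). $\mathcal{P}_K$ denotes the set of interpretable paths of length $K$. *)

theory Defs
  imports "HOL-Analysis.Analysis"
begin

text \<open>An interpretable path of length K from base model m0, represented as a
  function p :: nat => 'm where p 0 = m0 and p k is in S (p (k-1)) for 1 <= k <= K.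
  Only the values p 0, ..., p K matter.\<close>
definition interp_path :: "('m \<Rightarrow> 'm set) \<Rightarrow> 'm \<Rightarrow> nat \<Rightarrow> (nat \<Rightarrow> 'm) \<Rightarrow> bool" where
  "interp_path S m0 K p \<longleftrightarrow> p 0 = m0 \<and> (\<forall>k\<in>{1..K}. p k \<in> S (p (k - 1)))"

definition path_cost :: "('m \<Rightarrow> real) \<Rightarrow> real \<Rightarrow> real \<Rightarrow> nat \<Rightarrow> (nat \<Rightarrow> 'm) \<Rightarrow> real" where
  "path_cost c gam lam K p = c (p K) + lam * (\<Sum>k=1..K. gam ^ k * c (p k))"

definition z_lambda :: "('m \<Rightarrow> real) \<Rightarrow> ('m \<Rightarrow> 'm set) \<Rightarrow> 'm \<Rightarrow> real \<Rightarrow> real \<Rightarrow> nat \<Rightarrow> real" where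
  "z_lambda c S m0 gam lam K = (INF p \<in> {p. interp_path S m0 K p}. path_cost c gam lam K p)"

definition K_max :: "real \<Rightarrow> real \<Rightarrow> real \<Rightarrow> real \<Rightarrow> real" where
  "K_max cmin cmax gam lam =
     (if gam = 1 then cmax / (lam * cmin)
      else ln (1 + (gam - 1) * cmax / (lam * gam * cmin)) / ln gam)"

end

theory Submission
  imports Defs
begin

text \<open>Staying at the base model costs z(0) = c(m0) \<le> cmax, whereas every path of length K
  costs at least cmin (1 + \<lambda> (\<gamma> + ... + \<gamma>^K)). Hence an optimal K satisfies
  \<lambda> cmin (\<gamma> + ... + \<gamma>^K) \<le> cmax; summing the geometric series and taking
  logarithms gives K \<le> K_max.\<close>

lemma interp_path_in:
  assumes path: "interp_path S m0 K p" and m0: "m0 \<in> M"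
    and S_sub: "\<And>m. m \<in> M \<Longrightarrow> S m \<subseteq> M"
    and "k \<le> K"
  shows "p k \<in> M"
  using \<open>k \<le> K\<close>
proof (induction k)
  case 0
  then show ?case using path m0 by (simp add: interp_path_def)
next
  case (Suc k)
  then have "p (Suc k) \<in> S (p k)" using path by (force simp: interp_path_def)
  then show ?case using Suc S_sub by auto
qed

lemma interp_path_exists:
  assumes m0: "m0 \<in> M"
    and S_sub: "\<And>m. m \<in> M \<Longrightarrow> S m \<subseteq> M"
    and S_ne: "\<And>m. m \<in> M \<Longrightarrow> S m \<noteq> {}"
  shows "\<exists>p. interp_path S m0 K p"
proof (induction K)
  case 0
  have "interp_path S m0 0 (\<lambda>_. m0)" by (simp add: interp_path_def)
  then show ?case by blast
next
  case (Suc K)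
  then obtain p where p: "interp_path S m0 K p" ..
  have "p K \<in> M" using interp_path_in[OF p m0 S_sub] by simp
  then obtain x where x: "x \<in> S (p K)" using S_ne by blast
  have "interp_path S m0 (Suc K) (p(Suc K := x))"
    using p x by (auto simp: interp_path_def le_Suc_eq)
  then show ?case by blast
qed

lemma z_lambda_0: "z_lambda c S m0 gam lam 0 = c m0"
proof -
  have "path_cost c gam lam 0 ` {p. interp_path S m0 0 p} = {c m0}"
    by (auto simp: interp_path_def path_cost_def image_iff intro: exI[of _ "\<lambda>_. m0"])
  then show ?thesis by (simp add: z_lambda_def)
qed

lemma path_cost_ge:
  assumes path: "interp_path S m0 K p" and m0: "m0 \<in> M"
    and S_sub: "\<And>m. m \<in> M \<Longrightarrow> S m \<subseteq> M"
    and cmin: "\<And>m. m \<in> M \<Longrightarrow> cmin \<le> c m"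
    and gam: "gam \<ge> 0" and lam: "lam \<ge> 0"
  shows "cmin * (1 + lam * (\<Sum>k=1..K. gam ^ k)) \<le> path_cost c gam lam K p"
proof -
  have c_ge: "cmin \<le> c (p k)" if "k \<le> K" for k
    using cmin interp_path_in[OF path m0 S_sub that] by blast
  have "cmin * (\<Sum>k=1..K. gam ^ k) \<le> (\<Sum>k=1..K. gam ^ k * c (p k))"
    unfolding sum_distrib_left using c_ge gam
    by (intro sum_mono) (simp add: mult.commute[of cmin] mult_left_mono)
  then have "lam * (cmin * (\<Sum>k=1..K. gam ^ k)) \<le> lam * (\<Sum>k=1..K. gam ^ k * c (p k))"
    using lam by (rule mult_left_mono)
  then show ?thesis
    using c_ge[of K] by (simp add: path_cost_def algebra_simps)
qed

lemma z_lambda_ge: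
  assumes m0: "m0 \<in> M"
    and S_sub: "\<And>m. m \<in> M \<Longrightarrow> S m \<subseteq> M"
    and S_ne: "\<And>m. m \<in> M \<Longrightarrow> S m \<noteq> {}"
    and cmin: "\<And>m. m \<in> M \<Longrightarrow> cmin \<le> c m"
    and gam: "gam \<ge> 0" and lam: "lam \<ge> 0"
  shows "cmin * (1 + lam * (\<Sum>k=1..K. gam ^ k)) \<le> z_lambda c S m0 gam lam K"
  unfolding z_lambda_def
proof (rule cINF_greatest)
  show "{p. interp_path S m0 K p} \<noteq> {}"
    using interp_path_exists[of m0 M S K] m0 S_sub S_ne by blast
  show "cmin * (1 + lam * (\<Sum>k=1..K. gam ^ k)) \<le> path_cost c gam lam K p"
    if "p \<in> {p. interp_path S m0 K p}" for p
    using that path_cost_ge[of S m0 K p M cmin c gam lam] m0 S_sub cmin gam lam by blast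
qed

lemma sum_power_from_1_mult:
  fixes x :: "'a::comm_ring_1"
  shows "(x - 1) * (\<Sum>k=1..K. x ^ k) = x * (x ^ K - 1)"
  by (induction K) (simp_all add: algebra_simps)

lemma le_K_max_if_geometric_sum_le:
  assumes gam: "gam \<ge> 1" and lam: "lam > 0" and cmin: "cmin > 0"
    and bound: "lam * cmin * (\<Sum>k=1..K. gam ^ k) \<le> cmax"
  shows "real K \<le> K_max cmin cmax gam lam"
proof (cases "gam = 1")
  case True
  then show ?thesis
    using bound lam cmin by (simp add: K_max_def pos_le_divide_eq mult.commute)
next
  case False
  then have gam_gt: "gam > 1" using gam by simp
  have "gam * (gam ^ K - 1) = (gam - 1) * (\<Sum>k=1..K. gam ^ k)"
    by (rule sum_power_from_1_mult[symmetric])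
  also have "\<dots> \<le> (gam - 1) * (cmax / (lam * cmin))"
    using bound gam_gt lam cmin
    by (intro mult_left_mono) (simp_all add: pos_le_divide_eq ac_simps)
  finally have pow_le: "gam ^ K \<le> 1 + (gam - 1) * cmax / (lam * gam * cmin)"
    using gam_gt lam cmin by (simp add: field_simps)
  have "real K * ln gam = ln (gam ^ K)"
    using gam_gt by (simp add: ln_realpow)
  also have "\<dots> \<le> ln (1 + (gam - 1) * cmax / (lam * gam * cmin))"
  proof -
    have "0 < gam ^ K" using gam_gt by simp
    then show ?thesis using pow_le by (subst ln_le_cancel_iff) auto
  qed
  finally show ?thesis
    using gam_gt by (simp add: K_max_def pos_le_divide_eq)
qed

theorem proposition2:
  fixes M :: "'m set" and c :: "'m \<Rightarrow> real" and S :: "'m \<Rightarrow> 'm set" and m0 :: 'm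
    and cmin cmax gam lam :: real and Kopt :: nat
  assumes m0: "m0 \<in> M"
    and S_sub: "\<And>m. m \<in> M \<Longrightarrow> S m \<subseteq> M"
    and S_ne: "\<And>m. m \<in> M \<Longrightarrow> S m \<noteq> {}"
    and c_pos: "\<And>m. m \<in> M \<Longrightarrow> c m > 0"
    and cmin_pos: "0 < cmin"
    and c_bounds: "\<And>m. m \<in> M \<Longrightarrow> cmin \<le> c m \<and> c m \<le> cmax"
    and gamma: "gam \<ge> 1"
    and lambda: "lam > 0"
    and opt: "\<forall>K. z_lambda c S m0 gam lam Kopt \<le> z_lambda c S m0 gam lam K"
  shows "real Kopt \<le> K_max cmin cmax gam lam"
proof -
  have "cmin * (1 + lam * (\<Sum>k=1..Kopt. gam ^ k)) \<le> z_lambda c S m0 gam lam Kopt"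
    using z_lambda_ge[OF m0 S_sub S_ne] c_bounds gamma lambda by simp
  also have "\<dots> \<le> z_lambda c S m0 gam lam 0"
    using opt by blast
  also have "\<dots> \<le> cmax"
    using c_bounds[OF m0] by (simp add: z_lambda_0)
  finally have "lam * cmin * (\<Sum>k=1..Kopt. gam ^ k) \<le> cmax"
    using cmin_pos by (simp add: algebra_simps)
  then show ?thesis
    using le_K_max_if_geometric_sum_le gamma lambda cmin_pos by blast
qed

end
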